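(* Let $X$ be a polyhedral normed space and $f: X\to X$ nonexpansive and real analytic. Let $\mathcal{M}(f)$ be the union of all minimal locked subsets of $B_{X^*}$ for $f$. If $x,y\in\operatorname{Fix}(f)$ satisfy $\phi(x)=\phi(y)$ for all $\phi\in\mathcal{M}(f)$, then $x=y$.
   Context: A polyhedral normed space is a finite-dimensional real normed space whose closed unit ball has finitely many extreme points; $B_{X^*}$ is the closed unit ball of the dual space. Nonexpansive: $\|f(x)-f(y)\|\le\|x-y\|$ for all $x,y$. Real analytic: locally given by a convergent power series. $\operatorname{Fix}(f)$ is the fixed point set of $f$. The duality map is $J(x)=\{\phi\in B_{X^*}: \phi(x)=\|x\|\}$. For $E\subseteq B_{X^*}$: $S_E(f)=\{x\in X: \phi(f(x))=\phi(x)\text{ for all }\phi\in E\}$. A set $E\subseteq B_{X^*}$ is locked (for $f$) if there exist $v,w\in S_E(f)$ with $J(v-w)=E$; a locked set is minimal if no proper subset of it is locked. *)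

theory Defs
  imports "HOL-Analysis.Analysis"
begin

text \<open>A finite-dimensional real normed space is modelled as a euclidean_space type 'a
(used only for its linear and topological structure) equipped with an arbitrary norm N.\<close>

definition is_norm :: "('a::real_vector \<Rightarrow> real) \<Rightarrow> bool" where
  "is_norm N \<longleftrightarrow> (\<forall>x y. N (x + y) \<le> N x + N y) \<and> (\<forall>c x. N (c *\<^sub>R x) = \<bar>c\<bar> * N x)
     \<and> (\<forall>x. N x = 0 \<longleftrightarrow> x = 0)"

definition polyhedral_norm :: "('a::euclidean_space \<Rightarrow> real) \<Rightarrow> bool" where
  "polyhedral_norm N \<longleftrightarrow> is_norm N \<and> finite {p. p extreme_point_of {x. N x \<le> 1}}"

text \<open>Closed unit ball of the dual space (all linear functionals are bounded in finite dimension).\<close>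
definition dual_ball :: "('a::real_vector \<Rightarrow> real) \<Rightarrow> ('a \<Rightarrow> real) set" where
  "dual_ball N = {\<phi>. linear \<phi> \<and> (\<forall>x. \<bar>\<phi> x\<bar> \<le> N x)}"

definition nonexpansive :: "('a::real_vector \<Rightarrow> real) \<Rightarrow> ('a \<Rightarrow> 'a) \<Rightarrow> bool" where
  "nonexpansive N f \<longleftrightarrow> (\<forall>x y. N (f x - f y) \<le> N (x - y))"

definition monomial :: "('a::euclidean_space \<Rightarrow> nat) \<Rightarrow> 'a \<Rightarrow> real" where
  "monomial \<alpha> v = (\<Prod>i\<in>Basis. (v \<bullet> i) ^ \<alpha> i)"

definition multi_indices :: "('a::euclidean_space \<Rightarrow> nat) set" where
  "multi_indices = {\<alpha>. \<forall>i. i \<notin> Basis \<longrightarrow> \<alpha> i = 0}"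

definition real_analytic :: "('a::euclidean_space \<Rightarrow> 'b::euclidean_space) \<Rightarrow> bool" where
  "real_analytic f \<longleftrightarrow> (\<forall>x0. \<exists>r>0. \<exists>c :: ('a \<Rightarrow> nat) \<Rightarrow> 'b.
      \<forall>x\<in>ball x0 r. ((\<lambda>\<alpha>. monomial \<alpha> (x - x0) *\<^sub>R c \<alpha>) has_sum f x) multi_indices)"

definition duality_map :: "('a::real_vector \<Rightarrow> real) \<Rightarrow> 'a \<Rightarrow> ('a \<Rightarrow> real) set" where
  "duality_map N x = {\<phi> \<in> dual_ball N. \<phi> x = N x}"

definition S_set :: "('a \<Rightarrow> real) set \<Rightarrow> ('a \<Rightarrow> 'a) \<Rightarrow> 'a set" where
  "S_set E f = {x. \<forall>\<phi>\<in>E. \<phi> (f x) = \<phi> x}"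

definition locked :: "('a::real_vector \<Rightarrow> real) \<Rightarrow> ('a \<Rightarrow> 'a) \<Rightarrow> ('a \<Rightarrow> real) set \<Rightarrow> bool" where
  "locked N f E \<longleftrightarrow> E \<subseteq> dual_ball N \<and>
     (\<exists>v\<in>S_set E f. \<exists>w\<in>S_set E f. duality_map N (v - w) = E)"

definition minimal_locked :: "('a::real_vector \<Rightarrow> real) \<Rightarrow> ('a \<Rightarrow> 'a) \<Rightarrow> ('a \<Rightarrow> real) set \<Rightarrow> bool" where
  "minimal_locked N f E \<longleftrightarrow> locked N f E \<and> (\<forall>E'. E' \<subset> E \<longrightarrow> \<not> locked N f E')"

definition M_set :: "('a::real_vector \<Rightarrow> real) \<Rightarrow> ('a \<Rightarrow> 'a) \<Rightarrow> ('a \<Rightarrow> real) set" where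
  "M_set N f = \<Union>{E. minimal_locked N f E}"

end

theory Submission
  imports Defs
begin

text \<open>Since x and y are fixed points they lie in every S_E f, so J(x - y) is locked. Every locked
  set is a duality set J(v - w), and a polyhedral norm has only finitely many of those: by
  Krein--Milman each is cut out of the dual ball by a set of extreme points of the unit ball. Hence
  J(x - y) contains a minimal locked set E, which is nonempty by Hahn--Banach. Any \<phi> \<in> E belongs
  to M(f), so N (x - y) = \<phi> (x - y) = 0.\<close>

lemma is_norm_triangle: "is_norm N \<Longrightarrow> N (x + y) \<le> N x + N y"
  by (simp add: is_norm_def)

lemma is_norm_scaleR: "is_norm N \<Longrightarrow> N (c *\<^sub>R x) = \<bar>c\<bar> * N x"
  by (simp add: is_norm_def)

lemma is_norm_eq_0_iff: "is_norm N \<Longrightarrow> N x = 0 \<longleftrightarrow> x = 0"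
  by (simp add: is_norm_def)

lemma is_norm_zero: "is_norm N \<Longrightarrow> N 0 = 0"
  by (simp add: is_norm_eq_0_iff)

lemma is_norm_minus: "is_norm N \<Longrightarrow> N (- x) = N x"
  using is_norm_scaleR[of N "-1" x] by simp

lemma is_norm_nonneg: "is_norm N \<Longrightarrow> 0 \<le> N x"
  using is_norm_triangle[of N x "- x"] by (simp add: is_norm_zero is_norm_minus)

lemma is_norm_pos: "is_norm N \<Longrightarrow> x \<noteq> 0 \<Longrightarrow> 0 < N x"
  using is_norm_nonneg is_norm_eq_0_iff by (metis order_less_le)

lemma convex_on_is_norm:
  assumes "is_norm N"
  shows "convex_on UNIV N"
  unfolding convex_on_def
proof (intro conjI ballI allI impI)
  fix x y and u v :: real assume "0 \<le> u" "0 \<le> v"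
  then show "N (u *\<^sub>R x + v *\<^sub>R y) \<le> u * N x + v * N y"
    using is_norm_triangle[OF assms, of "u *\<^sub>R x" "v *\<^sub>R y"] by (simp add: is_norm_scaleR[OF assms])
qed simp

lemma continuous_on_is_norm:
  fixes N :: "'a::euclidean_space \<Rightarrow> real"
  assumes "is_norm N"
  shows "continuous_on UNIV N"
  by (simp add: assms convex_on_continuous convex_on_is_norm)

lemma convex_sublevel:
  assumes "convex_on UNIV f"
  shows "convex {x. f x \<le> c}"
  unfolding convex_def
proof (intro ballI allI impI)
  fix x y and u v :: real
  assume "x \<in> {x. f x \<le> c}" "y \<in> {x. f x \<le> c}" "0 \<le> u" "0 \<le> v" "u + v = 1"
  then show "u *\<^sub>R x + v *\<^sub>R y \<in> {x. f x \<le> c}"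
    using convex_lower[OF assms, of x y u v] by simp
qed

lemma is_norm_ge_norm:
  fixes N :: "'a::euclidean_space \<Rightarrow> real"
  assumes N: "is_norm N"
  obtains c where "c > 0" "\<And>x. c * norm x \<le> N x"
proof -
  have "sphere (0::'a) 1 \<noteq> {}"
    by (metis norm_Basis SOME_Basis mem_sphere_0 empty_iff)
  then obtain z where z: "z \<in> sphere 0 1" "\<And>y. y \<in> sphere 0 1 \<Longrightarrow> N z \<le> N y"
    using continuous_attains_inf[of "sphere 0 1" N]
      continuous_on_subset[OF continuous_on_is_norm[OF N]] by auto
  show thesis
  proof
    have "z \<noteq> 0" using z(1) by auto
    then show "N z > 0" by (rule is_norm_pos[OF N])
    fix x :: 'a
    show "N z * norm x \<le> N x"
    proof (cases "x = 0")
      case False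
      then have "N z \<le> N ((1 / norm x) *\<^sub>R x)" by (intro z(2)) simp
      then show ?thesis using False by (simp add: is_norm_scaleR[OF N] field_simps)
    qed (simp add: is_norm_zero[OF N])
  qed
qed

lemma compact_is_norm_unit_ball:
  fixes N :: "'a::euclidean_space \<Rightarrow> real"
  assumes N: "is_norm N"
  shows "compact {x. N x \<le> 1}"
proof -
  obtain c where c: "c > 0" "\<And>x. c * norm x \<le> N x" using is_norm_ge_norm[OF N] by blast
  have "closed {x. N x \<le> 1}"
    using closed_Collect_le[OF continuous_on_is_norm[OF N] continuous_on_const] by simp
  moreover have "bounded {x. N x \<le> 1}"
    unfolding bounded_iff
  proof (intro exI[of _ "1 / c"] ballI)
    fix x assume "x \<in> {x. N x \<le> 1}"
    then have "c * norm x \<le> 1" using c(2)[of x] by simp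
    then show "norm x \<le> 1 / c" using c(1) by (simp add: field_simps)
  qed
  ultimately show ?thesis by (simp add: compact_eq_bounded_closed)
qed

lemma is_norm_not_in_interior_ball:
  fixes N :: "'a::euclidean_space \<Rightarrow> real"
  assumes N: "is_norm N" and u: "u \<noteq> 0"
  shows "u \<notin> interior {y. N y \<le> N u}"
proof
  assume "u \<in> interior {y. N y \<le> N u}"
  then obtain e where e: "e > 0" "ball u e \<subseteq> {y. N y \<le> N u}" using mem_interior by blast
  define t where "t = e / (2 * norm u)"
  have t: "t > 0" using e(1) u by (simp add: t_def)
  have "dist u ((1 + t) *\<^sub>R u) = norm ((1 + t) *\<^sub>R u - u)" by (metis dist_commute dist_norm)
  also have "(1 + t) *\<^sub>R u - u = t *\<^sub>R u" by (simp add: algebra_simps)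
  also have "norm (t *\<^sub>R u) = t * norm u" using t by simp
  also have "\<dots> = e / 2" using u by (simp add: t_def)
  finally have "(1 + t) *\<^sub>R u \<in> ball u e" using e(1) by (simp only: mem_ball)
  then have "N ((1 + t) *\<^sub>R u) \<le> N u" using e(2) by blast
  moreover have "N u < N ((1 + t) *\<^sub>R u)"
    using t is_norm_pos[OF N u] by (simp add: is_norm_scaleR[OF N])
  ultimately show False by linarith
qed

lemma is_norm_supporting_vector:
  fixes N :: "'a::euclidean_space \<Rightarrow> real"
  assumes N: "is_norm N" and u: "u \<noteq> 0"
  obtains a where "a \<noteq> 0" "\<And>y. N y \<le> N u \<Longrightarrow> a \<bullet> y \<le> a \<bullet> u"
proof -
  let ?B = "{y. N y \<le> N u}"
  have cont: "continuous_on UNIV N" by (rule continuous_on_is_norm[OF N])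
  have "closed ?B" using closed_Collect_le[OF cont continuous_on_const] by simp
  have "{y. N y < N u} \<subseteq> interior ?B"
    using open_Collect_less[OF cont continuous_on_const] by (intro interior_maximal) auto
  then have "0 \<in> interior ?B" using is_norm_pos[OF N u] by (auto simp: is_norm_zero[OF N])
  then have "rel_interior ?B = interior ?B" by (intro rel_interior_nonempty_interior) blast
  then have "u \<notin> rel_interior ?B" using is_norm_not_in_interior_ball[OF N u] by simp
  moreover have "u \<in> closure ?B" using \<open>closed ?B\<close> by simp
  moreover have "convex ?B" by (rule convex_sublevel[OF convex_on_is_norm[OF N]])
  ultimately obtain a where "a \<noteq> 0" "\<And>y. y \<in> closure ?B \<Longrightarrow> a \<bullet> u \<le> a \<bullet> y"
    using supporting_hyperplane_relative_frontier by blast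
  then show thesis
    using that[of "- a"] \<open>closed ?B\<close> by simp
qed

text \<open>Finite-dimensional Hahn--Banach: a supporting hyperplane of the ball of radius N u at u,
  rescaled, is a norming functional for u.\<close>
lemma is_norm_exists_norming_functional:
  fixes N :: "'a::euclidean_space \<Rightarrow> real"
  assumes N: "is_norm N" and u: "u \<noteq> 0"
  obtains \<phi> where "\<phi> \<in> dual_ball N" "\<phi> u = N u"
proof -
  obtain a where a: "a \<noteq> 0" "\<And>y. N y \<le> N u \<Longrightarrow> a \<bullet> y \<le> a \<bullet> u"
    using is_norm_supporting_vector[OF N u] by blast
  have Nu: "N u > 0" using is_norm_pos[OF N u] .
  have scaled: "N u * (a \<bullet> y) \<le> (a \<bullet> u) * N y" for y
  proof (cases "y = 0")
    case False
    then have Ny: "N y > 0" using is_norm_pos[OF N] by blast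
    have "a \<bullet> ((N u / N y) *\<^sub>R y) \<le> a \<bullet> u"
      using Ny Nu by (intro a(2)) (simp add: is_norm_scaleR[OF N])
    then show ?thesis using Ny by (simp add: field_simps)
  qed (simp add: is_norm_zero[OF N])
  have au: "a \<bullet> u > 0"
  proof -
    have "0 < N u * (a \<bullet> a)" using Nu a(1) by simp
    also have "\<dots> \<le> (a \<bullet> u) * N a" by (rule scaled)
    finally show ?thesis using is_norm_pos[OF N a(1)] by (simp add: zero_less_mult_iff)
  qed
  define \<phi> where "\<phi> y = N u / (a \<bullet> u) * (a \<bullet> y)" for y
  have "linear \<phi>"
    unfolding \<phi>_def by (intro linearI) (simp_all add: inner_add_right algebra_simps)
  moreover have le: "\<phi> y \<le> N y" for y
    using scaled[of y] au by (simp add: \<phi>_def field_simps)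
  have "\<bar>\<phi> y\<bar> \<le> N y" for y
  proof -
    have "\<phi> (- y) = - \<phi> y" by (simp add: \<phi>_def)
    then have "- \<phi> y \<le> N y" using le[of "- y"] is_norm_minus[OF N, of y] by simp
    then show ?thesis using le[of y] by linarith
  qed
  ultimately have "\<phi> \<in> dual_ball N" unfolding dual_ball_def by blast
  moreover have "\<phi> u = N u" using au by (simp add: \<phi>_def)
  ultimately show thesis by (rule that)
qed

lemma duality_map_nonempty:
  fixes N :: "'a::euclidean_space \<Rightarrow> real"
  assumes N: "is_norm N"
  shows "duality_map N u \<noteq> {}"
proof (cases "u = 0")
  case True
  have "(\<lambda>_. 0) \<in> duality_map N u"
    using True by (simp add: duality_map_def dual_ball_def is_norm_nonneg[OF N] is_norm_zero[OF N] linear_zero)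
  then show ?thesis by blast
next
  case False
  then show ?thesis
    using is_norm_exists_norming_functional[OF N False] by (auto simp: duality_map_def)
qed

lemma convex_combination_eq_1_iff:
  fixes l g :: "'b \<Rightarrow> real"
  assumes P: "finite P" and l: "\<And>p. p \<in> P \<Longrightarrow> 0 \<le> l p" "sum l P = 1"
    and g: "\<And>p. p \<in> P \<Longrightarrow> g p \<le> 1"
  shows "(\<Sum>p\<in>P. l p * g p) = 1 \<longleftrightarrow> (\<forall>p\<in>P. 0 < l p \<longrightarrow> g p = 1)"
proof -
  have "(\<Sum>p\<in>P. l p * g p) = 1 \<longleftrightarrow> (\<Sum>p\<in>P. l p * (1 - g p)) = 0"
    using l(2) by (simp add: right_diff_distrib sum_subtractf)
  also have "\<dots> \<longleftrightarrow> (\<forall>p\<in>P. l p * (1 - g p) = 0)"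
    using P by (rule sum_nonneg_eq_0_iff) (simp add: l(1) g)
  also have "\<dots> \<longleftrightarrow> (\<forall>p\<in>P. 0 < l p \<longrightarrow> g p = 1)"
  proof (intro ball_cong refl)
    fix p assume "p \<in> P"
    then show "l p * (1 - g p) = 0 \<longleftrightarrow> (0 < l p \<longrightarrow> g p = 1)"
      using l(1)[of p] by (cases "l p = 0") auto
  qed
  finally show ?thesis .
qed

text \<open>For a polyhedral norm every duality set is a face of the dual ball cut out by finitely many
  extreme points A of the unit ball: those carrying positive weight in a convex representation of
  u / N u.\<close>
lemma duality_map_eq_extreme_face:
  fixes N :: "'a::euclidean_space \<Rightarrow> real"
  assumes N: "is_norm N" and fin: "finite {p. p extreme_point_of {x. N x \<le> 1}}"
  obtains A where "A \<subseteq> {p. p extreme_point_of {x. N x \<le> 1}}"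
    "duality_map N u = {\<phi> \<in> dual_ball N. \<forall>p\<in>A. \<phi> p = 1}"
proof (cases "u = 0")
  case True
  then show thesis
    by (intro that[of "{}"]) (auto simp: duality_map_def dual_ball_def linear_0 is_norm_zero[OF N])
next
  case False
  define P where "P = {p. p extreme_point_of {x. N x \<le> 1}}"
  define z where "z = (1 / N u) *\<^sub>R u"
  have Nu: "N u > 0" using is_norm_pos[OF N False] .
  have "{x. N x \<le> 1} = convex hull P"
    unfolding P_def using compact_is_norm_unit_ball[OF N] convex_sublevel[OF convex_on_is_norm[OF N]]
    by (rule Krein_Milman_Minkowski)
  moreover have "N z \<le> 1" using Nu by (simp add: z_def is_norm_scaleR[OF N])
  ultimately have "z \<in> convex hull P" by blast
  then obtain l where l: "\<And>p. p \<in> P \<Longrightarrow> 0 \<le> l p" "sum l P = 1" "(\<Sum>p\<in>P. l p *\<^sub>R p) = z"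
    using fin by (auto simp: P_def convex_hull_finite)
  have P_le: "N p \<le> 1" if "p \<in> P" for p
    using that by (simp add: P_def extreme_point_of_def)
  show thesis
  proof (rule that[of "{p\<in>P. 0 < l p}"])
    show "{p\<in>P. 0 < l p} \<subseteq> {p. p extreme_point_of {x. N x \<le> 1}}" by (auto simp: P_def)
    have "\<phi> u = N u \<longleftrightarrow> (\<forall>p\<in>{p\<in>P. 0 < l p}. \<phi> p = 1)" if "\<phi> \<in> dual_ball N" for \<phi>
    proof -
      have lin: "linear \<phi>" and bd: "\<And>x. \<bar>\<phi> x\<bar> \<le> N x" using that by (auto simp: dual_ball_def)
      have "\<phi> u = N u \<longleftrightarrow> \<phi> z = 1"
        using Nu by (auto simp: z_def linear_scale[OF lin] field_simps)
      also have "\<phi> z = (\<Sum>p\<in>P. l p * \<phi> p)"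
        by (simp add: l(3)[symmetric] linear_sum[OF lin] linear_scale[OF lin])
      also have "\<dots> = 1 \<longleftrightarrow> (\<forall>p\<in>P. 0 < l p \<longrightarrow> \<phi> p = 1)"
      proof (rule convex_combination_eq_1_iff[OF _ l(1,2)])
        show "finite P" using fin by (simp add: P_def)
        show "\<phi> p \<le> 1" if "p \<in> P" for p using bd[of p] P_le[OF that] by linarith
      qed
      finally show ?thesis by blast
    qed
    then show "duality_map N u = {\<phi> \<in> dual_ball N. \<forall>p\<in>{p\<in>P. 0 < l p}. \<phi> p = 1}"
      by (auto simp: duality_map_def)
  qed
qed

lemma finite_range_duality_map:
  fixes N :: "'a::euclidean_space \<Rightarrow> real"
  assumes "polyhedral_norm N"
  shows "finite (range (duality_map N))"
proof -
  let ?P = "{p. p extreme_point_of {x. N x \<le> 1}}"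
  let ?face = "\<lambda>A. {\<phi> \<in> dual_ball N. \<forall>p\<in>A. \<phi> p = 1}"
  have N: "is_norm N" and fin: "finite ?P" using assms by (simp_all add: polyhedral_norm_def)
  have "duality_map N u \<in> ?face ` Pow ?P" for u
  proof -
    obtain A where "A \<subseteq> ?P" "duality_map N u = ?face A"
      by (rule duality_map_eq_extreme_face[OF N fin])
    then show ?thesis by blast
  qed
  then have "range (duality_map N) \<subseteq> ?face ` Pow ?P" by blast
  moreover have "finite (?face ` Pow ?P)" using fin by simp
  ultimately show ?thesis by (rule finite_subset)
qed

lemma locked_nonempty:
  fixes N :: "'a::euclidean_space \<Rightarrow> real"
  assumes "is_norm N" "locked N f E"
  shows "E \<noteq> {}"
  using assms duality_map_nonempty unfolding locked_def by blast

lemma locked_duality_map_fixed_points: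
  assumes "f x = x" "f y = y"
  shows "locked N f (duality_map N (x - y))"
proof -
  have "x \<in> S_set E f" "y \<in> S_set E f" for E using assms by (simp_all add: S_set_def)
  moreover have "duality_map N (x - y) \<subseteq> dual_ball N" by (auto simp: duality_map_def)
  ultimately show ?thesis unfolding locked_def by blast
qed

lemma exists_minimal_locked_subset:
  fixes N :: "'a::euclidean_space \<Rightarrow> real"
  assumes N: "polyhedral_norm N" and E: "locked N f E"
  obtains E' where "E' \<subseteq> E" "minimal_locked N f E'"
proof -
  define F where "F = {E'. locked N f E' \<and> E' \<subseteq> E}"
  have "F \<subseteq> range (duality_map N)" by (auto simp: F_def locked_def)
  then have "finite F" using finite_range_duality_map[OF N] by (rule finite_subset)
  moreover have "E \<in> F" using E by (simp add: F_def)
  ultimately obtain m where m: "m \<in> F" "\<And>E'. E' \<in> F \<Longrightarrow> E' \<subseteq> m \<Longrightarrow> m = E'"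
    using finite_has_minimal[of F] by blast
  have "minimal_locked N f m"
    unfolding minimal_locked_def
  proof (intro conjI allI impI notI)
    show "locked N f m" using m(1) by (simp add: F_def)
    fix E' assume "E' \<subset> m" "locked N f E'"
    then have "E' \<in> F" using m(1) by (auto simp: F_def)
    then show False using m(2) \<open>E' \<subset> m\<close> by blast
  qed
  then show thesis using m(1) by (intro that) (auto simp: F_def)
qed

theorem lemma2p6:
  fixes N :: "'a::euclidean_space \<Rightarrow> real" and f :: "'a \<Rightarrow> 'a" and x y :: 'a
  assumes "polyhedral_norm N"
    and "nonexpansive N f"
    and "real_analytic f"
    and "f x = x" and "f y = y"
    and "\<forall>\<phi>\<in>M_set N f. \<phi> x = \<phi> y"
  shows "x = y"
proof -
  have N: "is_norm N" using assms(1) by (simp add: polyhedral_norm_def)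
  obtain E where E: "E \<subseteq> duality_map N (x - y)" "minimal_locked N f E"
    by (rule exists_minimal_locked_subset[OF assms(1) locked_duality_map_fixed_points[OF assms(4,5)]])
  have "locked N f E" using E(2) by (simp add: minimal_locked_def)
  then have "E \<noteq> {}" by (rule locked_nonempty[OF N])
  then obtain \<phi> where "\<phi> \<in> E" by blast
  then have "\<phi> \<in> M_set N f" using E(2) unfolding M_set_def by blast
  then have "\<phi> x = \<phi> y" using assms(6) by blast
  have "\<phi> \<in> duality_map N (x - y)" using E(1) \<open>\<phi> \<in> E\<close> by blast
  then have "linear \<phi>" "\<phi> (x - y) = N (x - y)" by (simp_all add: duality_map_def dual_ball_def)
  then have "N (x - y) = 0" using \<open>\<phi> x = \<phi> y\<close> by (simp add: linear_diff)
  then show ?thesis using is_norm_eq_0_iff[OF N] by simp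
qed

end
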